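(* Let $m,n\ge 1$ be integers, let $r_b,r_w\ge 0$, and let $R_{th0}>0$ satisfy $R_{th0}>m r_b+n r_w$. Write $d_{ij}=i r_b+j r_w$ for $1\le i\le m$, $1\le j\le n$. Consider the equation in the unknown $R> m r_b + n r_w$: $$\ln(R_{th0})=\frac{1}{mn}\sum_{i=1}^{m}\sum_{j=1}^{n}\ln\big(R-d_{ij}\big). \qquad (\ast)$$ Define the sequence $(R^{(l)})_{l\ge 0}$ by $R^{(0)}=R_{th0}$ and, for $l\ge 1$, $$\ln\big(R^{(l)}\big)=\ln(R_{th0})-\frac{1}{mn}\sum_{i=1}^{m}\sum_{j=1}^{n}\ln\Big(1-\frac{d_{ij}}{R^{(l-1)}}\Big).$$ Then every $R^{(l)}$ is well defined (i.e. $R^{(l)}>m r_b+n r_w$), equation $(\ast)$ has a solution $R_{th\_array}$ in $(m r_b+n r_w,\infty)$, and the sequence $R^{(l)}$ converges to $R_{th\_array}$ as $l\to\infty$.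
   Context: This iteration is called the STMC threshold solver algorithm in the paper (iterate until a fixed number of iterations or until successive iterates differ by at most a tolerance $\epsilon$). Here $R_{th0}$ plays the role of the optimal read resistance threshold in the absence of line resistance, $r_b$ and $r_w$ are the per-junction bitline and wordline resistances, and $(\ast)$ is the equation defining the common read threshold $R_{th\_array}$ for an $m\times n$ crossbar array. *)

theory Defs
  imports "HOL-Analysis.Analysis"
begin

definition dij :: "real \<Rightarrow> real \<Rightarrow> nat \<Rightarrow> nat \<Rightarrow> real" where
  "dij rb rw i j = real i * rb + real j * rw"

primrec stmc_iter :: "nat \<Rightarrow> nat \<Rightarrow> real \<Rightarrow> real \<Rightarrow> real \<Rightarrow> nat \<Rightarrow> real" where
  "stmc_iter m n rb rw Rth0 0 = Rth0"
| "stmc_iter m n rb rw Rth0 (Suc l) =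
     exp (ln Rth0 - (1 / (real m * real n)) *
       (\<Sum>i=1..m. \<Sum>j=1..n. ln (1 - dij rb rw i j / stmc_iter m n rb rw Rth0 l)))"

end

theory Submission
  imports Defs
begin

text \<open>The step map T(R) = exp (ln R_th0 - mean ln (1 - d_ij / R)) is antitone on (D, \<infinity>),
  D = m r_b + n r_w, and maps it into [R_th0, \<infinity>). So the even iterates increase, the odd ones
  decrease, both are bounded, and their limits a, b satisfy T a = b, T b = a; fixed points of T
  are exactly the solutions of the threshold equation. The real work is to exclude 2-cycles
  a < b: with x = D/a, y = D/b, e = d_ij/D and \<kappa> = ln R_th0 - ln D > 0, the cycle equations
  first force x + y \<ge> 1, and then the inequality ln x ln (1 - e x) \<le> ln y ln (1 - e y),
  averaged over the junctions, gives \<kappa> (ln x - ln y) \<le> 0, a contradiction.\<close>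

lemma eventually_sequentially_even_odd:
  assumes "eventually (\<lambda>k. P (2 * k)) sequentially"
    and "eventually (\<lambda>k. P (2 * k + 1)) sequentially"
  shows "eventually P sequentially"
proof -
  obtain N0 N1 where "\<And>k. k \<ge> N0 \<Longrightarrow> P (2 * k)" "\<And>k. k \<ge> N1 \<Longrightarrow> P (2 * k + 1)"
    using assms by (auto simp: eventually_sequentially)
  then have "P l" if "l \<ge> 2 * N0 + 2 * N1 + 1" for l
    using that by (cases "even l") (auto elim!: evenE oddE)
  then show ?thesis
    by (auto simp: eventually_sequentially)
qed

lemma LIMSEQ_even_odd:
  assumes "(\<lambda>k. f (2 * k)) \<longlonglongrightarrow> l" and "(\<lambda>k. f (2 * k + 1)) \<longlonglongrightarrow> l"
  shows "f \<longlonglongrightarrow> l"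
  using assms by (auto simp: tendsto_def intro: eventually_sequentially_even_odd)

theorem antimono_iterates_tendsto_fixpoint:
  fixes T :: "real \<Rightarrow> real" and x0 :: real
  assumes into: "\<And>x. x0 \<le> x \<Longrightarrow> x0 \<le> T x"
    and anti: "\<And>x y. x0 \<le> x \<Longrightarrow> x \<le> y \<Longrightarrow> T y \<le> T x"
    and cont: "\<And>x. x0 \<le> x \<Longrightarrow> isCont T x"
    and no_two_cycle: "\<And>x y. x0 \<le> x \<Longrightarrow> x0 \<le> y \<Longrightarrow> T x = y \<Longrightarrow> T y = x \<Longrightarrow> x = y"
  shows "\<exists>a \<ge> x0. T a = a \<and> (\<lambda>l. (T ^^ l) x0) \<longlonglongrightarrow> a"
proof -
  define E where "E k = (T ^^ (2 * k)) x0" for k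
  have E_Suc: "E (Suc k) = T (T (E k))" for k
    by (simp add: E_def)
  have iterate_odd: "(T ^^ (2 * k + 1)) x0 = T (E k)" for k
    by (simp add: E_def)
  have iterate_ge: "x0 \<le> (T ^^ l) x0" for l
    by (induction l) (auto intro: into)
  then have E_ge: "x0 \<le> E k" and TE_ge: "x0 \<le> T (E k)" for k
    unfolding E_def by (auto intro: into)
  have E_inc: "E k \<le> E (Suc k)" for k
  proof (induction k)
    case 0
    show ?case using E_Suc[of 0] TE_ge[of 0] by (simp add: E_def into)
  next
    case (Suc k)
    then have "T (E (Suc k)) \<le> T (E k)" using E_ge anti by blast
    then show ?case using E_Suc TE_ge anti by metis
  qed
  have TE_dec: "T (E (Suc k)) \<le> T (E k)" for k
    using E_ge E_inc anti by blast
  have E_le: "E k \<le> T x0" for k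
  proof (cases k)
    case 0
    then show ?thesis by (simp add: E_def into)
  next
    case (Suc j)
    then show ?thesis using E_Suc TE_ge anti by (metis order.refl)
  qed
  define a where "a = (SUP k. E k)"
  define b where "b = (INF k. T (E k))"
  have E_lim: "E \<longlonglongrightarrow> a"
    unfolding a_def by (intro LIMSEQ_incseq_SUP incseq_SucI E_inc) (auto intro!: bdd_aboveI[where M = "T x0"] E_le)
  have TE_lim: "(\<lambda>k. T (E k)) \<longlonglongrightarrow> b"
    unfolding b_def by (intro LIMSEQ_decseq_INF decseq_SucI TE_dec) (auto intro!: bdd_belowI[where m = x0] TE_ge)
  have a_ge: "x0 \<le> a" and b_ge: "x0 \<le> b"
    using LIMSEQ_le_const[OF E_lim] LIMSEQ_le_const[OF TE_lim] E_ge TE_ge by auto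
  have "(\<lambda>k. T (E k)) \<longlonglongrightarrow> T a"
    using isCont_tendsto_compose[OF cont[OF a_ge] E_lim] .
  then have Ta: "T a = b"
    using TE_lim LIMSEQ_unique by blast
  have "(\<lambda>k. E (Suc k)) \<longlonglongrightarrow> T b"
    unfolding E_Suc using isCont_tendsto_compose[OF cont[OF b_ge] TE_lim] .
  then have Tb: "T b = a"
    using E_lim[THEN LIMSEQ_Suc] LIMSEQ_unique by blast
  have "a = b"
    using no_two_cycle[OF a_ge b_ge Ta Tb] .
  moreover have "(\<lambda>l. (T ^^ l) x0) \<longlonglongrightarrow> a"
  proof (rule LIMSEQ_even_odd)
    show "(\<lambda>k. (T ^^ (2 * k)) x0) \<longlonglongrightarrow> a"
      using E_lim unfolding E_def .
    show "(\<lambda>k. (T ^^ (2 * k + 1)) x0) \<longlonglongrightarrow> a"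
      using TE_lim unfolding iterate_odd \<open>a = b\<close> .
  qed
  ultimately show ?thesis
    using a_ge Ta by blast
qed

lemma ln_div_one_minus_mono:
  fixes s t :: real
  assumes "0 < s" "s \<le> t" "t < 1"
  shows "ln s / (1 - s) \<le> ln t / (1 - t)"
proof -
  have t: "0 < t" using assms by linarith
  have tangent_s: "ln s - ln t \<le> (s - t) / t"
    using ln_le_minus_one[of "s / t"] assms t by (simp add: ln_div diff_divide_distrib)
  have tangent_1: "- ln t \<le> (1 - t) / t"
    using ln_le_minus_one[of "1 / t"] t by (simp add: ln_div diff_divide_distrib)
  have "(1 - t) * (ln s - ln t) \<le> (1 - t) * ((s - t) / t)"
    using tangent_s assms by (intro mult_left_mono) auto
  moreover have "(t - s) * (- ln t) \<le> (t - s) * ((1 - t) / t)"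
    using tangent_1 assms by (intro mult_left_mono) auto
  moreover have "(1 - t) * ((s - t) / t) + (t - s) * ((1 - t) / t) = 0"
    using t by (simp add: field_simps)
  ultimately have "(1 - t) * ln s \<le> (1 - s) * ln t"
    by (simp add: algebra_simps)
  then show ?thesis
    using assms by (simp add: field_simps)
qed

lemma ln_mult_ln_one_minus_antimono:
  fixes u v :: real
  assumes "1/2 \<le> u" "u \<le> v" "v < 1"
  shows "ln v * ln (1 - v) \<le> ln u * ln (1 - u)"
proof -
  have "- (ln u * ln (1 - u)) \<le> - (ln v * ln (1 - v))"
  proof (rule deriv_nonneg_imp_mono[where g = "\<lambda>t. - (ln t * ln (1 - t))"])
    fix t assume t: "t \<in> {u..v}"
    then have "0 < t" "t < 1" "1 - t \<le> t"
      using assms by auto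
    then show "((\<lambda>t. - (ln t * ln (1 - t))) has_real_derivative ln t / (1 - t) - ln (1 - t) / t) (at t)"
      by (auto intro!: derivative_eq_intros simp: field_simps)
    show "0 \<le> ln t / (1 - t) - ln (1 - t) / t"
      using ln_div_one_minus_mono[of "1 - t" t] \<open>0 < t\<close> \<open>t < 1\<close> \<open>1 - t \<le> t\<close> by simp
  qed (use assms in auto)
  then show ?thesis by simp
qed

lemma ln_mult_ln_one_minus_le:
  fixes x y :: real
  assumes "0 < y" "y < x" "x < 1" "1 \<le> x + y"
  shows "ln x * ln (1 - x) \<le> ln y * ln (1 - y)"
proof (cases "1/2 \<le> y")
  case True
  then show ?thesis
    using ln_mult_ln_one_minus_antimono[of y x] assms by auto
next
  case False
  then have "ln x * ln (1 - x) \<le> ln (1 - y) * ln (1 - (1 - y))"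
    using ln_mult_ln_one_minus_antimono[of "1 - y" x] assms by auto
  then show ?thesis by (simp add: mult.commute)
qed

lemma min_endpoints_le_of_deriv_single_sign_change:
  fixes g g' :: "real \<Rightarrow> real"
  assumes "a \<le> x" "x \<le> b"
    and deriv: "\<And>t. a \<le> t \<Longrightarrow> t \<le> b \<Longrightarrow> (g has_real_derivative g' t) (at t)"
    and sign: "\<And>s t. a \<le> s \<Longrightarrow> s \<le> t \<Longrightarrow> t \<le> b \<Longrightarrow> 0 \<le> g' t \<Longrightarrow> 0 \<le> g' s"
  shows "min (g a) (g b) \<le> g x"
proof (cases "0 \<le> g' x")
  case True
  have "g a \<le> g x"
  proof (rule deriv_nonneg_imp_mono[where g = g and g' = g'])
    fix t assume "t \<in> {a..x}"
    then show "0 \<le> g' t"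
      using True sign[of t x] assms(2) by simp
  qed (use assms(1,2) deriv in auto)
  then show ?thesis by simp
next
  case False
  have "g b \<le> g x"
  proof (rule deriv_nonpos_imp_antimono[where g = g and g' = g'])
    fix t assume "t \<in> {x..b}"
    then show "g' t \<le> 0"
      using False sign[of x t] assms(1) by force
  qed (use assms(1,2) deriv in auto)
  then show ?thesis by simp
qed

lemma ln_mult_ln_one_minus_scaled_le:
  fixes x y e :: real
  assumes "0 < y" "y < x" "x < 1" "1 \<le> x + y" "0 \<le> e" "e \<le> 1"
  shows "ln x * ln (1 - e * x) \<le> ln y * ln (1 - e * y)"
proof -
  \<comment> \<open>The numerator of g' decreases in t, so g attains its minimum on [0,1] at an endpoint.\<close>
  define g where "g t = ln y * ln (1 - t * y) - ln x * ln (1 - t * x)" for t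
  define g' where "g' t = (x * ln x - y * ln y - t * (x * y * (ln x - ln y))) /
    ((1 - t * x) * (1 - t * y))" for t
  have pos: "0 < 1 - t * x" "0 < 1 - t * y" if "0 \<le> t" "t \<le> 1" for t
  proof -
    have "t * x \<le> x" "t * y \<le> y"
      using that assms by (auto intro: mult_left_le_one_le)
    then show "0 < 1 - t * x" "0 < 1 - t * y"
      using assms by linarith+
  qed
  have "(g has_real_derivative g' t) (at t)" if "0 \<le> t" "t \<le> 1" for t
  proof -
    have "(g has_real_derivative x * ln x / (1 - t * x) - y * ln y / (1 - t * y)) (at t)"
      unfolding g_def using pos[OF that] by (auto intro!: derivative_eq_intros simp: mult.commute)
    moreover have "x * ln x / (1 - t * x) - y * ln y / (1 - t * y) = g' t"
    proof -
      have "x * ln x / (1 - t * x) - y * ln y / (1 - t * y) =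
          (x * ln x * (1 - t * y) - y * ln y * (1 - t * x)) / ((1 - t * x) * (1 - t * y))"
        using pos[OF that] by (simp add: diff_frac_eq)
      also have "x * ln x * (1 - t * y) - y * ln y * (1 - t * x) =
          x * ln x - y * ln y - t * (x * y * (ln x - ln y))"
        by (simp add: algebra_simps)
      finally show ?thesis
        by (simp add: g'_def)
    qed
    ultimately show ?thesis
      by simp
  qed
  moreover have "0 \<le> g' s" if "0 \<le> s" "s \<le> t" "t \<le> 1" "0 \<le> g' t" for s t
  proof -
    have "0 < x * y * (ln x - ln y)"
      using assms by simp
    then have "x * ln x - y * ln y - t * (x * y * (ln x - ln y)) \<le>
        x * ln x - y * ln y - s * (x * y * (ln x - ln y))"
      using \<open>s \<le> t\<close> by (intro diff_left_mono mult_right_mono) auto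
    moreover have "0 \<le> x * ln x - y * ln y - t * (x * y * (ln x - ln y))"
      using \<open>0 \<le> g' t\<close> mult_pos_pos[OF pos[of t]] that
      by (simp add: g'_def zero_le_divide_iff)
    ultimately show ?thesis
      unfolding g'_def using pos[of s] that by (intro divide_nonneg_pos mult_pos_pos) auto
  qed
  ultimately have "min (g 0) (g 1) \<le> g e"
    using assms by (intro min_endpoints_le_of_deriv_single_sign_change[where g' = g']) simp_all
  moreover have "g 0 = 0"
    by (simp add: g_def)
  moreover have "0 \<le> g 1"
    using ln_mult_ln_one_minus_le[OF assms(1-4)] by (simp add: g_def)
  ultimately have "0 \<le> g e"
    by linarith
  then show ?thesis
    unfolding g_def by simp
qed

lemma mean_ln_one_minus_no_two_cycle:
  fixes e :: "'a \<Rightarrow> real" and x y \<kappa> :: real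
  assumes I: "finite I" "I \<noteq> {}"
    and e: "\<And>k. k \<in> I \<Longrightarrow> 0 \<le> e k" "\<And>k. k \<in> I \<Longrightarrow> e k \<le> 1"
    and xy: "0 < y" "y < x" "x < 1" and "0 < \<kappa>"
    and ln_y: "ln y = (\<Sum>k\<in>I. ln (1 - e k * x)) / card I - \<kappa>"
    and ln_x: "ln x = (\<Sum>k\<in>I. ln (1 - e k * y)) / card I - \<kappa>"
  shows False
proof -
  define S where "S z = (\<Sum>k\<in>I. ln (1 - e k * z))" for z
  have N: "0 < real (card I)"
    using I by (simp add: card_gt_0_iff)
  have pos: "0 < 1 - e k * z" if "k \<in> I" "0 \<le> z" "z \<le> x" for k z
    using mult_mono[OF e(2)[OF that(1)] that(3) zero_le_one that(2)] xy by linarith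
  have balance: "card I * ln y + S y = card I * ln x + S x"
    using ln_x ln_y N unfolding S_def by (simp add: field_simps)
  have "1 \<le> x + y"
  proof (rule ccontr)
    assume "\<not> 1 \<le> x + y"
    have "ln y + ln (1 - e k * y) < ln x + ln (1 - e k * x)" if k: "k \<in> I" for k
    proof -
      have "e k * (x + y) \<le> x + y"
        using e[OF k] xy by (intro mult_left_le_one_le) auto
      then have "e k * (x + y) < 1"
        using \<open>\<not> 1 \<le> x + y\<close> by linarith
      then have "y * (1 - e k * y) < x * (1 - e k * x)"
        using mult_strict_left_mono[of 0 "1 - e k * (x + y)" "x - y"] xy
        by (simp add: algebra_simps)
      moreover have "0 < y * (1 - e k * y)"
        using pos[OF k, of y] xy by simp
      ultimately have "ln (y * (1 - e k * y)) < ln (x * (1 - e k * x))"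
        by (simp add: ln_less_cancel_iff)
      then show ?thesis
        using pos[OF k, of y] pos[OF k, of x] xy by (simp add: ln_mult)
    qed
    then have "(\<Sum>k\<in>I. ln y + ln (1 - e k * y)) < (\<Sum>k\<in>I. ln x + ln (1 - e k * x))"
      using I by (intro sum_strict_mono) auto
    then show False
      using balance by (simp add: sum.distrib S_def)
  qed
  then have "(\<Sum>k\<in>I. ln x * ln (1 - e k * x)) \<le> (\<Sum>k\<in>I. ln y * ln (1 - e k * y))"
    using xy e by (intro sum_mono ln_mult_ln_one_minus_scaled_le) auto
  then have "ln x * (S x / card I) \<le> ln y * (S y / card I)"
    using N by (simp add: S_def sum_distrib_left divide_right_mono)
  moreover have "S x / card I = ln y + \<kappa>" "S y / card I = ln x + \<kappa>"
    using ln_x ln_y unfolding S_def by simp_all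
  ultimately have "\<kappa> * (ln x - ln y) \<le> 0"
    by (simp add: algebra_simps)
  moreover have "0 < \<kappa> * (ln x - ln y)"
    using \<open>0 < \<kappa>\<close> xy by simp
  ultimately show False
    by simp
qed

text \<open>The junctions form an arbitrary finite index set I with line resistances w k \<in> [0, D];
  for the crossbar, I = {1..m} \<times> {1..n}, w (i, j) = d_ij and D = m r_b + n r_w.\<close>

locale stmc_threshold =
  fixes I :: "'a set" and w :: "'a \<Rightarrow> real" and D R0 :: real
  assumes finite_I: "finite I" and nonempty_I: "I \<noteq> {}"
    and w_nonneg: "\<And>k. k \<in> I \<Longrightarrow> 0 \<le> w k"
    and w_le: "\<And>k. k \<in> I \<Longrightarrow> w k \<le> D"
    and D_less_R0: "D < R0"
begin

definition mean_ln_ratio :: "real \<Rightarrow> real" where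
  "mean_ln_ratio R = (\<Sum>k\<in>I. ln (1 - w k / R)) / card I"

definition stmc_step :: "real \<Rightarrow> real" where
  "stmc_step R = exp (ln R0 - mean_ln_ratio R)"

lemma D_nonneg: "0 \<le> D"
  using nonempty_I w_nonneg w_le by (meson ex_in_conv order_trans)

lemma card_I_pos: "0 < real (card I)"
  using finite_I nonempty_I by (simp add: card_gt_0_iff)

lemma one_minus_ratio_pos:
  assumes "D < R" "k \<in> I"
  shows "0 < 1 - w k / R"
  using assms w_le[of k] D_nonneg by simp

lemma mean_ln_ratio_nonpos:
  assumes "D < R"
  shows "mean_ln_ratio R \<le> 0"
proof -
  have "ln (1 - w k / R) \<le> 0" if "k \<in> I" for k
    using one_minus_ratio_pos[OF assms that] w_nonneg[OF that] assms D_nonneg by simp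
  then show ?thesis
    unfolding mean_ln_ratio_def by (simp add: sum_nonpos divide_nonpos_nonneg)
qed

lemma mean_ln_ratio_mono:
  assumes "D < R" "R \<le> S"
  shows "mean_ln_ratio R \<le> mean_ln_ratio S"
proof -
  have "ln (1 - w k / R) \<le> ln (1 - w k / S)" if "k \<in> I" for k
  proof -
    have "w k / S \<le> w k / R"
      using assms w_nonneg[OF that] D_nonneg by (intro divide_left_mono) auto
    then show ?thesis
      using one_minus_ratio_pos[OF assms(1) that] by simp
  qed
  then show ?thesis
    unfolding mean_ln_ratio_def using card_I_pos by (intro divide_right_mono sum_mono) auto
qed

lemma ln_stmc_step: "ln (stmc_step R) = ln R0 - mean_ln_ratio R"
  by (simp add: stmc_step_def)

lemma stmc_step_ge:
  assumes "D < R"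
  shows "R0 \<le> stmc_step R"
proof -
  have "exp (ln R0) \<le> stmc_step R"
    unfolding stmc_step_def using mean_ln_ratio_nonpos[OF assms] by simp
  then show ?thesis
    using D_less_R0 D_nonneg by simp
qed

lemma stmc_step_antimono:
  assumes "D < R" "R \<le> S"
  shows "stmc_step S \<le> stmc_step R"
  unfolding stmc_step_def using mean_ln_ratio_mono[OF assms] by simp

lemma isCont_stmc_step:
  assumes "D < R"
  shows "isCont stmc_step R"
proof -
  have "R \<noteq> 0"
    using assms D_nonneg by simp
  then show ?thesis
    unfolding stmc_step_def mean_ln_ratio_def
    by (intro continuous_intros) (use one_minus_ratio_pos[OF assms] card_I_pos in force)+
qed

lemma stmc_step_no_two_cycle:
  assumes "D < a" "a < b" "stmc_step a = b" "stmc_step b = a"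
  shows False
proof (cases "D = 0")
  case True
  then have "w k = 0" if "k \<in> I" for k
    using w_nonneg[OF that] w_le[OF that] by simp
  then have "stmc_step R = R0" for R
    using D_less_R0 True by (simp add: stmc_step_def mean_ln_ratio_def)
  then show False
    using assms by simp
next
  case False
  then have "0 < D"
    using D_nonneg by simp
  have "0 < a" "0 < b"
    using assms D_nonneg by linarith+
  have mean_scaled: "mean_ln_ratio R = (\<Sum>k\<in>I. ln (1 - w k / D * (D / R))) / card I" for R
    unfolding mean_ln_ratio_def using \<open>0 < D\<close> by simp
  show False
  proof (rule mean_ln_one_minus_no_two_cycle[of I "\<lambda>k. w k / D" "D / b" "D / a" "ln R0 - ln D"])
    show "ln (D / b) = (\<Sum>k\<in>I. ln (1 - w k / D * (D / a))) / card I - (ln R0 - ln D)"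
      using arg_cong[OF assms(3), of ln] \<open>0 < D\<close> \<open>0 < b\<close>
      by (simp add: ln_stmc_step mean_scaled ln_div)
    show "ln (D / a) = (\<Sum>k\<in>I. ln (1 - w k / D * (D / b))) / card I - (ln R0 - ln D)"
      using arg_cong[OF assms(4), of ln] \<open>0 < D\<close> \<open>0 < a\<close>
      by (simp add: ln_stmc_step mean_scaled ln_div)
  qed (use finite_I nonempty_I w_nonneg w_le \<open>0 < D\<close> \<open>0 < a\<close> assms(1,2) D_less_R0 in
    \<open>auto simp: divide_strict_left_mono\<close>)
qed

lemma stmc_step_fixpoint_eq:
  assumes "D < a" "stmc_step a = a"
  shows "ln R0 = (\<Sum>k\<in>I. ln (a - w k)) / card I"
proof -
  have "0 < a"
    using assms D_nonneg by linarith
  have "ln (a - w k) = ln a + ln (1 - w k / a)" if "k \<in> I" for k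
  proof -
    have "a - w k = a * (1 - w k / a)"
      using \<open>0 < a\<close> by (simp add: field_simps)
    then show ?thesis
      using \<open>0 < a\<close> one_minus_ratio_pos[OF assms(1) that] by (simp add: ln_mult)
  qed
  then have "(\<Sum>k\<in>I. ln (a - w k)) / card I = ln a + mean_ln_ratio a"
    using card_I_pos by (simp add: mean_ln_ratio_def sum.distrib add_divide_distrib)
  also have "\<dots> = ln R0"
    using arg_cong[OF assms(2), of ln] by (simp add: ln_stmc_step)
  finally show ?thesis ..
qed

lemma stmc_iterates_ge: "R0 \<le> (stmc_step ^^ l) R0"
  by (induction l) (auto intro: stmc_step_ge less_le_trans[OF D_less_R0])

theorem stmc_iterates_tendsto_threshold:
  "\<exists>a > D. ln R0 = (\<Sum>k\<in>I. ln (a - w k)) / card I \<and> (\<lambda>l. (stmc_step ^^ l) R0) \<longlonglongrightarrow> a"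
proof -
  have "\<exists>a \<ge> R0. stmc_step a = a \<and> (\<lambda>l. (stmc_step ^^ l) R0) \<longlonglongrightarrow> a"
  proof (rule antimono_iterates_tendsto_fixpoint)
    fix x y
    assume "R0 \<le> x" "R0 \<le> y"
    then have "D < x" "D < y"
      using D_less_R0 by linarith+
    then show "stmc_step x = y \<Longrightarrow> stmc_step y = x \<Longrightarrow> x = y"
      using stmc_step_no_two_cycle by (metis linorder_neqE_linordered_idom)
  qed (use D_less_R0 in \<open>auto intro: stmc_step_ge stmc_step_antimono isCont_stmc_step\<close>)
  then show ?thesis
    using D_less_R0 stmc_step_fixpoint_eq by (meson less_le_trans)
qed

end

lemma mean_over_grid:
  fixes g :: "nat \<times> nat \<Rightarrow> real"
  shows "(\<Sum>k\<in>{1..m} \<times> {1..n}. g k) / real (card ({1..m} \<times> {1..n})) =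
    1 / (real m * real n) * (\<Sum>i=1..m. \<Sum>j=1..n. g (i, j))"
proof -
  have "(\<Sum>i=1..m. \<Sum>j=1..n. g (i, j)) = (\<Sum>k\<in>{1..m} \<times> {1..n}. g k)"
    by (simp add: sum.cartesian_product)
  then show ?thesis
    by (simp add: card_cartesian_product)
qed

lemma stmc_threshold_crossbar:
  assumes "1 \<le> m" "1 \<le> n" "0 \<le> rb" "0 \<le> rw" "real m * rb + real n * rw < Rth0"
  shows "stmc_threshold ({1..m} \<times> {1..n}) (\<lambda>(i, j). dij rb rw i j) (real m * rb + real n * rw) Rth0"
proof
  fix k assume "k \<in> {1..m} \<times> {1..n}"
  then obtain i j where "k = (i, j)" "i \<le> m" "j \<le> n"
    by auto
  moreover have "real i * rb \<le> real m * rb" "real j * rw \<le> real n * rw"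
    using calculation assms by (simp_all add: mult_right_mono)
  ultimately show "0 \<le> (case k of (i, j) \<Rightarrow> dij rb rw i j)"
    and "(case k of (i, j) \<Rightarrow> dij rb rw i j) \<le> real m * rb + real n * rw"
    using assms by (simp_all add: dij_def)
qed (use assms in auto)

theorem lemma1:
  fixes m n :: nat and rb rw Rth0 :: real
  assumes "m \<ge> 1" and "n \<ge> 1" and "rb \<ge> 0" and "rw \<ge> 0"
    and "Rth0 > 0" and "Rth0 > real m * rb + real n * rw"
  shows "(\<forall>l. stmc_iter m n rb rw Rth0 l > real m * rb + real n * rw) \<and>
    (\<exists>Rarr. Rarr > real m * rb + real n * rw \<and>
       ln Rth0 = (1 / (real m * real n)) * (\<Sum>i=1..m. \<Sum>j=1..n. ln (Rarr - dij rb rw i j)) \<and>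
       (stmc_iter m n rb rw Rth0 \<longlonglongrightarrow> Rarr))"
proof -
  interpret stmc_threshold "{1..m} \<times> {1..n}" "\<lambda>(i, j). dij rb rw i j"
    "real m * rb + real n * rw" Rth0
    using assms by (intro stmc_threshold_crossbar) auto
  have iterates: "stmc_iter m n rb rw Rth0 = (\<lambda>l. (stmc_step ^^ l) Rth0)"
  proof
    fix l show "stmc_iter m n rb rw Rth0 l = (stmc_step ^^ l) Rth0"
    proof (induction l)
      case (Suc l)
      then show ?case
        unfolding funpow.simps comp_def stmc_step_def mean_ln_ratio_def mean_over_grid
        by simp
    qed simp
  qed
  show ?thesis
    using stmc_iterates_ge less_le_trans[OF D_less_R0] stmc_iterates_tendsto_threshold
    unfolding iterates mean_over_grid by auto
qed

end
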